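(* Let $f\colon[0,1]\to\mathbb R$ be real analytic. Then for every $\varepsilon>0$ there exists an integer $R\ge 0$ such that for all integers $r\ge R$, $m\ge 1$, $b\ge 1$ and every $B=(B_1,\dots,B_b)\in\mathrm{PTE}(m,b,r)$, the quantities $$c_j=\sum_{i\in B_j}\int_{(i-1)/m}^{i/m} f(x)\,dx,\qquad j=1,\dots,b,$$ satisfy $|c_i-c_j|<\varepsilon$ for all $i,j\in\{1,\dots,b\}$.
   Context: $[m]=\{1,\dots,m\}$. A partition of $[m]$ into $b$ blocks is an ordered list $(B_1,\dots,B_b)$ of pairwise disjoint (possibly empty) subsets with union $[m]$. It is $r$-regular if $\sum_{x\in B_1}x^k=\dots=\sum_{x\in B_b}x^k$ for all $k=0,1,\dots,r$. $\mathrm{PTE}(m,b,r)$ denotes the set of $r$-regular partitions of $[m]$ into $b$ blocks. *)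

theory Defs
  imports "HOL-Analysis.Analysis"
begin

definition real_analytic_on :: "(real \<Rightarrow> real) \<Rightarrow> real set \<Rightarrow> bool" where
  "real_analytic_on f S \<longleftrightarrow>
     (\<forall>x0\<in>S. \<exists>d>0. \<exists>a::nat \<Rightarrow> real. \<forall>x\<in>S. \<bar>x - x0\<bar> < d \<longrightarrow>
        (\<lambda>n. a n * (x - x0) ^ n) sums f x)"

definition is_partition :: "nat \<Rightarrow> nat \<Rightarrow> (nat \<Rightarrow> nat set) \<Rightarrow> bool" where
  "is_partition m b B \<longleftrightarrow>
     (\<forall>i\<in>{1..b}. \<forall>j\<in>{1..b}. i \<noteq> j \<longrightarrow> B i \<inter> B j = {}) \<and>
     (\<Union>j\<in>{1..b}. B j) = {1..m}"

definition r_regular :: "nat \<Rightarrow> nat \<Rightarrow> (nat \<Rightarrow> nat set) \<Rightarrow> bool" where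
  "r_regular b r B \<longleftrightarrow>
     (\<forall>k\<in>{0..r}. \<forall>i\<in>{1..b}. \<forall>j\<in>{1..b}. (\<Sum>x\<in>B i. x ^ k) = (\<Sum>x\<in>B j. x ^ k))"

definition PTE :: "nat \<Rightarrow> nat \<Rightarrow> nat \<Rightarrow> (nat \<Rightarrow> nat set) set" where
  "PTE m b r = {B. is_partition m b B \<and> r_regular b r B}"

end

theory Submission
  imports Defs "HOL-Computational_Algebra.Polynomial"
begin

text \<open>Only continuity of \<open>f\<close> matters. By Weierstrass, \<open>f\<close> is within \<open>\<epsilon>/3\<close> of a polynomial
  \<open>q\<close> on \<open>[0,1]\<close>. The integral of \<open>q\<close> over the cell \<open>[(x-1)/m, x/m]\<close> is a polynomial in
  \<open>x\<close> of degree at most \<open>deg q + 1\<close>, so once \<open>r > deg q\<close> its sums over the blocks of an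
  \<open>r\<close>-regular partition all coincide. Replacing \<open>f\<close> by \<open>q\<close> changes a block sum by at most
  \<open>\<epsilon>/3\<close>, since a block has at most \<open>m\<close> cells of length \<open>1/m\<close>.\<close>

lemma real_analytic_on_imp_continuous_on:
  assumes "real_analytic_on f S"
  shows "continuous_on S f"
proof -
  have "continuous (at x0 within S) f" if x0: "x0 \<in> S" for x0
  proof -
    obtain d a where d: "d > 0"
      and ser: "\<And>x. x \<in> S \<Longrightarrow> \<bar>x - x0\<bar> < d \<Longrightarrow> (\<lambda>n. a n * (x - x0) ^ n) sums f x"
      using assms x0 unfolding real_analytic_on_def by blast
    define h where "h y = (\<Sum>n. a n * (y - x0) ^ n)" for y
    have agree: "\<And>x. x \<in> S \<Longrightarrow> dist x x0 < d \<Longrightarrow> h x = f x"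
      using ser by (auto simp: h_def dist_real_def sums_iff)
    show ?thesis
    proof (cases "\<exists>x1\<in>S. 0 < \<bar>x1 - x0\<bar> \<and> \<bar>x1 - x0\<bar> < d")
      case True
      then obtain x1 where x1: "x1 \<in> S" "0 < \<bar>x1 - x0\<bar>" "\<bar>x1 - x0\<bar> < d" by blast
      have "summable (\<lambda>n. a n * (x1 - x0) ^ n)"
        using ser[OF x1(1,3)] sums_summable by blast
      then have "isCont (\<lambda>y. \<Sum>n. a n * y ^ n) (x0 - x0)"
        by (rule isCont_powser) (use x1 in simp)
      then have "isCont h x0"
        unfolding h_def by (intro continuous_intros isCont_o2[where f = "\<lambda>y. y - x0"]) auto
      then have "continuous (at x0 within S) h"
        by (rule continuous_at_imp_continuous_within)
      then show ?thesis
        by (rule continuous_transform_within[OF _ d x0 agree])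
    next
      case False
      then have "\<And>x. x \<in> S \<Longrightarrow> dist x x0 < d \<Longrightarrow> f x0 = f x"
        by (auto simp: dist_real_def)
      then show ?thesis
        by (rule continuous_transform_within[OF continuous_const d x0])
    qed
  qed
  then show ?thesis
    unfolding continuous_on_eq_continuous_within by blast
qed

lemma Stone_Weierstrass_poly:
  fixes f :: "real \<Rightarrow> real"
  assumes "compact S" "continuous_on S f" "0 < e"
  obtains q where "\<And>x. x \<in> S \<Longrightarrow> \<bar>f x - poly q x\<bar> < e"
proof -
  obtain g where "real_polynomial_function g" and approx: "\<And>x. x \<in> S \<Longrightarrow> \<bar>f x - g x\<bar> < e"
    using Stone_Weierstrass_real_polynomial_function[OF assms] by blast
  then obtain a n where "g = (\<lambda>x. \<Sum>i\<le>n. a i * x ^ i)"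
    using real_polynomial_function_iff_sum by blast
  then have "g = poly (\<Sum>i\<le>n. monom (a i) i)"
    by (simp add: fun_eq_iff poly_sum poly_monom)
  then show ?thesis
    using approx that by blast
qed

definition poly_antideriv :: "'a::field_char_0 poly \<Rightarrow> 'a poly" where
  "poly_antideriv q = (\<Sum>i\<le>degree q. monom (coeff q i / of_nat (Suc i)) (Suc i))"

lemma pderiv_sum: "pderiv (\<Sum>i\<in>A. p i) = (\<Sum>i\<in>A. pderiv (p i))"
  using higher_pderiv_sum[of 1] by simp

lemma pderiv_poly_antideriv: "pderiv (poly_antideriv q) = q"
proof -
  have "pderiv (poly_antideriv q) = (\<Sum>i\<le>degree q. monom (coeff q i) i)"
    by (simp add: poly_antideriv_def pderiv_sum pderiv_monom del: of_nat_Suc)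
  then show ?thesis
    by (simp add: poly_as_sum_of_monoms)
qed

lemma degree_poly_antideriv: "degree (poly_antideriv q) \<le> Suc (degree q)"
  unfolding poly_antideriv_def
  by (intro degree_sum_le order.trans[OF degree_monom_le]) auto

lemma has_integral_poly:
  fixes q :: "real poly"
  assumes "u \<le> v"
  shows "(poly q has_integral poly (poly_antideriv q) v - poly (poly_antideriv q) u) {u..v}"
proof -
  have "(poly (poly_antideriv q) has_real_derivative poly q x) (at x within {u..v})" for x
    using poly_DERIV[of "poly_antideriv q" x] pderiv_poly_antideriv[of q]
    by (simp add: has_field_derivative_at_within)
  then show ?thesis
    using assms by (intro fundamental_theorem_of_calculus)
      (auto simp: has_real_derivative_iff_has_vector_derivative[symmetric])
qed

lemma cell_integral_poly_eq_poly:
  fixes q :: "real poly" and m :: real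
  assumes "m > 0"
  obtains G where "degree G \<le> Suc (degree q)"
    and "\<And>x. integral {(x - 1) / m .. x / m} (poly q) = poly G x"
proof
  define P where "P = poly_antideriv q"
  define G where "G = pcompose P [:0, 1 / m:] - pcompose P [:- 1 / m, 1 / m:]"
  have deg_comp: "degree (pcompose P [:c, 1 / m:]) \<le> Suc (degree q)" for c
    using degree_poly_antideriv[of q] assms by (simp add: P_def degree_pcompose)
  show "degree G \<le> Suc (degree q)"
    unfolding G_def by (intro degree_diff_le deg_comp)
  fix x
  have "(x - 1) / m \<le> x / m"
    using assms by (simp add: divide_right_mono)
  then have "integral {(x - 1) / m .. x / m} (poly q) = poly P (x / m) - poly P ((x - 1) / m)"
    unfolding P_def by (rule integral_unique[OF has_integral_poly])
  moreover have "poly [:0, 1 / m:] x = x / m" "poly [:- 1 / m, 1 / m:] x = (x - 1) / m"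
    by (simp_all add: diff_divide_distrib)
  ultimately show "integral {(x - 1) / m .. x / m} (poly q) = poly G x"
    by (simp add: G_def poly_pcompose)
qed

lemma r_regular_sum_poly_eq:
  assumes "r_regular b r B" "degree q \<le> r" "i \<in> {1..b}" "j \<in> {1..b}"
  shows "(\<Sum>x\<in>B i. poly q (real x)) = (\<Sum>x\<in>B j. poly q (real x))"
proof -
  have power_sums: "(\<Sum>x\<in>B i. real x ^ k) = (\<Sum>x\<in>B j. real x ^ k)" if "k \<le> degree q" for k
  proof -
    have "(\<Sum>x\<in>B i. x ^ k) = (\<Sum>x\<in>B j. x ^ k)"
      using assms(1,3,4) that assms(2) unfolding r_regular_def by (meson atLeastAtMost_iff le_trans zero_le)
    then have "real (\<Sum>x\<in>B i. x ^ k) = real (\<Sum>x\<in>B j. x ^ k)"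
      by (rule arg_cong)
    then show ?thesis
      by simp
  qed
  have "(\<Sum>x\<in>B i. poly q (real x)) = (\<Sum>k\<le>degree q. coeff q k * (\<Sum>x\<in>B i. real x ^ k))"
    by (simp add: poly_altdef sum_distrib_left sum.swap[of _ "B i"])
  also have "\<dots> = (\<Sum>k\<le>degree q. coeff q k * (\<Sum>x\<in>B j. real x ^ k))"
    using power_sums by (intro sum.cong) simp_all
  also have "\<dots> = (\<Sum>x\<in>B j. poly q (real x))"
    by (simp add: poly_altdef sum_distrib_left sum.swap[of _ "B j"])
  finally show ?thesis .
qed

lemma r_regular_sum_cell_integrals_poly_eq:
  fixes q :: "real poly"
  assumes "r_regular b r B" "degree q < r" "m > 0" "i \<in> {1..b}" "j \<in> {1..b}"
  shows "(\<Sum>x\<in>B i. integral {(real x - 1) / real m .. real x / real m} (poly q))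
       = (\<Sum>x\<in>B j. integral {(real x - 1) / real m .. real x / real m} (poly q))"
proof -
  obtain G where "degree G \<le> Suc (degree q)"
    and G: "\<And>x. integral {(x - 1) / real m .. x / real m} (poly q) = poly G x"
    using cell_integral_poly_eq_poly[of "real m" q] assms(3) by auto
  then have "degree G \<le> r"
    using assms(2) by linarith
  then show ?thesis
    unfolding G by (rule r_regular_sum_poly_eq[OF assms(1) _ assms(4,5)])
qed

lemma abs_sum_cell_integrals_diff_le:
  fixes f g :: "real \<Rightarrow> real"
  assumes "continuous_on {0..1} f" "continuous_on {0..1} g"
    and "\<And>y. y \<in> {0..1} \<Longrightarrow> \<bar>f y - g y\<bar> \<le> \<delta>"
    and "A \<subseteq> {1..m}"
  shows "\<bar>(\<Sum>x\<in>A. integral {(real x - 1) / real m .. real x / real m} f)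
        - (\<Sum>x\<in>A. integral {(real x - 1) / real m .. real x / real m} g)\<bar> \<le> \<delta>"
proof -
  have \<delta>: "0 \<le> \<delta>"
    using assms(3)[of 0] by simp
  have cell: "\<bar>integral {(real x - 1) / real m .. real x / real m} f
      - integral {(real x - 1) / real m .. real x / real m} g\<bar> \<le> \<delta> / real m"
    if x: "x \<in> A" for x
  proof -
    define lo hi where "lo = (real x - 1) / real m" and "hi = real x / real m"
    have "1 \<le> x" "x \<le> m"
      using x assms(4) by auto
    then have "0 \<le> lo" "hi \<le> 1"
      by (simp_all add: lo_def hi_def)
    then have le: "lo \<le> hi" and sub: "{lo..hi} \<subseteq> {0..1}"
      by (simp_all add: lo_def hi_def divide_right_mono)
    have "((\<lambda>y. f y - g y) has_integral integral {lo..hi} f - integral {lo..hi} g) {lo..hi}"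
      by (intro has_integral_diff integrable_integral integrable_continuous_interval
          continuous_on_subset[OF assms(1) sub] continuous_on_subset[OF assms(2) sub])
    then have "norm (integral {lo..hi} f - integral {lo..hi} g) \<le> \<delta> * measure lborel {lo..hi}"
      by (rule has_integral_bound_real[OF \<delta> finite.emptyI]) (use sub assms(3) in auto)
    also have "\<delta> * measure lborel {lo..hi} = \<delta> / real m"
      by (simp add: content_real[OF le] lo_def hi_def diff_divide_distrib)
    finally show ?thesis
      by (simp add: lo_def hi_def)
  qed
  have "\<bar>(\<Sum>x\<in>A. integral {(real x - 1) / real m .. real x / real m} f)
        - (\<Sum>x\<in>A. integral {(real x - 1) / real m .. real x / real m} g)\<bar>
      \<le> (\<Sum>x\<in>A. \<bar>integral {(real x - 1) / real m .. real x / real m} f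
        - integral {(real x - 1) / real m .. real x / real m} g\<bar>)"
    unfolding sum_subtractf[symmetric] by (rule sum_abs)
  also have "\<dots> \<le> real (card A) * (\<delta> / real m)"
    using cell by (rule sum_bounded_above)
  also have "\<dots> \<le> \<delta>"
  proof -
    have "card A \<le> m"
      using card_mono[OF _ assms(4)] by simp
    then have "real (card A) * (\<delta> / real m) \<le> real m * (\<delta> / real m)"
      by (rule mult_right_mono[OF of_nat_mono]) (use \<delta> in simp)
    also have "\<dots> \<le> \<delta>"
      using \<delta> by (cases "m = 0") auto
    finally show ?thesis .
  qed
  finally show ?thesis .
qed

lemma PTE_block_integrals_close:
  fixes f :: "real \<Rightarrow> real"
  assumes cont: "continuous_on {0..1} f" and "\<epsilon> > 0"
  obtains R :: nat where "\<And>r m b B i j. R \<le> r \<Longrightarrow> 1 \<le> m \<Longrightarrow> B \<in> PTE m b r \<Longrightarrow>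
      i \<in> {1..b} \<Longrightarrow> j \<in> {1..b} \<Longrightarrow>
      \<bar>(\<Sum>x\<in>B i. integral {(real x - 1) / real m .. real x / real m} f)
        - (\<Sum>x\<in>B j. integral {(real x - 1) / real m .. real x / real m} f)\<bar> < \<epsilon>"
proof -
  obtain q where approx: "\<And>y. y \<in> {0..1} \<Longrightarrow> \<bar>f y - poly q y\<bar> < \<epsilon> / 3"
    using Stone_Weierstrass_poly[OF compact_Icc cont, of "\<epsilon> / 3"] \<open>\<epsilon> > 0\<close> by auto
  show ?thesis
  proof (rule that[of "Suc (degree q)"])
    fix r m b B i j
    assume "Suc (degree q) \<le> r" "1 \<le> m" "B \<in> PTE m b r" "i \<in> {1..b}" "j \<in> {1..b}"
    then have reg: "r_regular b r B" and blocks: "\<And>k. k \<in> {1..b} \<Longrightarrow> B k \<subseteq> {1..m}"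
      unfolding PTE_def is_partition_def by auto
    have close: "\<bar>(\<Sum>x\<in>B k. integral {(real x - 1) / real m .. real x / real m} f)
        - (\<Sum>x\<in>B k. integral {(real x - 1) / real m .. real x / real m} (poly q))\<bar> \<le> \<epsilon> / 3"
      if "k \<in> {1..b}" for k
      using approx less_imp_le blocks[OF that]
      by (intro abs_sum_cell_integrals_diff_le[OF cont continuous_on_poly]) auto
    have "(\<Sum>x\<in>B i. integral {(real x - 1) / real m .. real x / real m} (poly q))
        = (\<Sum>x\<in>B j. integral {(real x - 1) / real m .. real x / real m} (poly q))"
      using \<open>Suc (degree q) \<le> r\<close> \<open>1 \<le> m\<close> \<open>i \<in> {1..b}\<close> \<open>j \<in> {1..b}\<close>
      by (intro r_regular_sum_cell_integrals_poly_eq[OF reg]) auto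
    then show "\<bar>(\<Sum>x\<in>B i. integral {(real x - 1) / real m .. real x / real m} f)
        - (\<Sum>x\<in>B j. integral {(real x - 1) / real m .. real x / real m} f)\<bar> < \<epsilon>"
      using close[OF \<open>i \<in> {1..b}\<close>] close[OF \<open>j \<in> {1..b}\<close>] \<open>\<epsilon> > 0\<close> by linarith
  qed
qed

theorem mainTheorem16:
  fixes f :: "real \<Rightarrow> real"
  assumes "real_analytic_on f {0..1}"
  shows "\<forall>\<epsilon>>0. \<exists>R::nat. \<forall>r m b B. r \<ge> R \<longrightarrow> m \<ge> 1 \<longrightarrow> b \<ge> 1 \<longrightarrow> B \<in> PTE m b r \<longrightarrow>
           (\<forall>i\<in>{1..b}. \<forall>j\<in>{1..b}.
              \<bar>(\<Sum>x\<in>B i. integral {(real x - 1) / real m .. real x / real m} f)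
               - (\<Sum>x\<in>B j. integral {(real x - 1) / real m .. real x / real m} f)\<bar> < \<epsilon>)"
proof (intro allI impI)
  fix \<epsilon> :: real
  assume "\<epsilon> > 0"
  moreover have "continuous_on {0..1} f"
    using assms by (rule real_analytic_on_imp_continuous_on)
  ultimately obtain R :: nat where "\<And>r m b B i j. R \<le> r \<Longrightarrow> 1 \<le> m \<Longrightarrow> B \<in> PTE m b r \<Longrightarrow>
      i \<in> {1..b} \<Longrightarrow> j \<in> {1..b} \<Longrightarrow>
      \<bar>(\<Sum>x\<in>B i. integral {(real x - 1) / real m .. real x / real m} f)
        - (\<Sum>x\<in>B j. integral {(real x - 1) / real m .. real x / real m} f)\<bar> < \<epsilon>"
    using PTE_block_integrals_close by blast
  then show "\<exists>R::nat. \<forall>r m b B. r \<ge> R \<longrightarrow> m \<ge> 1 \<longrightarrow> b \<ge> 1 \<longrightarrow> B \<in> PTE m b r \<longrightarrow>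
           (\<forall>i\<in>{1..b}. \<forall>j\<in>{1..b}.
              \<bar>(\<Sum>x\<in>B i. integral {(real x - 1) / real m .. real x / real m} f)
               - (\<Sum>x\<in>B j. integral {(real x - 1) / real m .. real x / real m} f)\<bar> < \<epsilon>)"
    by blast
qed

end
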